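(* Let $n\ge 2$ and $2\le m\le n$ be integers and let $\alpha\in(0,2]$. Define the $n$-qubit observables $\mathcal{M}_Z=(|0\rangle\langle 0|)^{\otimes n}+(|1\rangle\langle 1|)^{\otimes n}$ and $\mathcal{M}_X=\sigma_x^{\otimes n}$, where $\sigma_x=|0\rangle\langle 1|+|1\rangle\langle 0|$, and let $\mathcal{W}^n_{se}(\alpha)=\alpha\mathcal{M}_Z+\mathcal{M}_X$. Then for every $m$-separable $n$-qubit state $\rho$, $$\operatorname{Tr}\big[\rho\,\mathcal{W}^n_{se}(\alpha)\big]\le \max\Big\{\alpha,\ \frac{\alpha}{2^{m-1}}+1\Big\}.$$
   Context: $\{|0\rangle,|1\rangle\}$ is the computational basis of $\mathbb{C}^2$. An $n$-qubit pure state $|\phi\rangle$ is $m$-separable if the $n$ qubits can be partitioned into $m$ nonempty disjoint subsets $\mathcal{G}_1,\dots,\mathcal{G}_m$ such that $|\phi\rangle=\bigotimes_{i=1}^m|\psi_{\mathcal{G}_i}\rangle$ with $|\psi_{\mathcal{G}_i}\rangle$ a pure state of the qubits in $\mathcal{G}_i$. A mixed $n$-qubit state $\rho$ is $m$-separable if it is a convex combination of projectors onto $m$-separable pure states (the partitions may differ between terms). *)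

theory Defs
  imports Complex_Main "Jordan_Normal_Form.Matrix"
begin

text \<open>Computational basis of n qubits: basis index x < 2^n; qubit k of basis state x
  is bit k of x (True = |1>, False = |0>).\<close>
definition qbit :: "nat \<Rightarrow> nat \<Rightarrow> bool" where
  "qbit x k = odd (x div 2 ^ k)"

text \<open>Tensor power A^{\<otimes> n} of a 2x2 matrix A (indices 0 = |0>, 1 = |1>).\<close>
definition tensor_pow :: "complex mat \<Rightarrow> nat \<Rightarrow> complex mat" where
  "tensor_pow A n = mat (2 ^ n) (2 ^ n)
     (\<lambda>(i, j). \<Prod>k<n. A $$ (of_bool (qbit i k), of_bool (qbit j k)))"

definition ket0bra0 :: "complex mat" where "ket0bra0 = mat 2 2 (\<lambda>(i,j). if i = 0 \<and> j = 0 then 1 else 0)"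
definition ket1bra1 :: "complex mat" where "ket1bra1 = mat 2 2 (\<lambda>(i,j). if i = 1 \<and> j = 1 then 1 else 0)"
definition sigma_x :: "complex mat" where "sigma_x = mat 2 2 (\<lambda>(i,j). if i \<noteq> j then 1 else 0)"

definition M_Z :: "nat \<Rightarrow> complex mat" where
  "M_Z n = tensor_pow ket0bra0 n + tensor_pow ket1bra1 n"

definition M_X :: "nat \<Rightarrow> complex mat" where
  "M_X n = tensor_pow sigma_x n"

definition W_se :: "nat \<Rightarrow> real \<Rightarrow> complex mat" where
  "W_se n \<alpha> = complex_of_real \<alpha> \<cdot>\<^sub>m M_Z n + M_X n"

definition mat_trace :: "complex mat \<Rightarrow> complex" where
  "mat_trace A = (\<Sum>i<dim_row A. A $$ (i, i))"

definition pure_state :: "nat \<Rightarrow> complex vec \<Rightarrow> bool" where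
  "pure_state n v \<longleftrightarrow> dim_vec v = 2 ^ n \<and> (\<Sum>x<2 ^ n. (cmod (v $ x))\<^sup>2) = 1"

text \<open>m-separable pure state: qubits {0..<n} partitioned into m nonempty disjoint groups G 0,..,G (m-1),
  and the amplitude is a product of amplitudes phi j of the group states, each depending only on the
  qubits of group j.\<close>
definition m_separable_pure :: "nat \<Rightarrow> nat \<Rightarrow> complex vec \<Rightarrow> bool" where
  "m_separable_pure n m v \<longleftrightarrow> pure_state n v \<and>
     (\<exists>(G :: nat \<Rightarrow> nat set) (\<phi> :: nat \<Rightarrow> (nat \<Rightarrow> bool) \<Rightarrow> complex).
        (\<forall>j<m. G j \<noteq> {}) \<and>
        (\<forall>j<m. \<forall>j'<m. j \<noteq> j' \<longrightarrow> G j \<inter> G j' = {}) \<and>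
        (\<Union>j<m. G j) = {0..<n} \<and>
        (\<forall>x<2 ^ n. v $ x = (\<Prod>j<m. \<phi> j (\<lambda>k. if k \<in> G j then qbit x k else False))))"

definition proj :: "complex vec \<Rightarrow> complex mat" where
  "proj v = mat (dim_vec v) (dim_vec v) (\<lambda>(i, j). v $ i * cnj (v $ j))"

definition m_separable :: "nat \<Rightarrow> nat \<Rightarrow> complex mat \<Rightarrow> bool" where
  "m_separable n m \<rho> \<longleftrightarrow>
     (\<exists>(K :: nat) (p :: nat \<Rightarrow> real) (v :: nat \<Rightarrow> complex vec).
        (\<forall>k<K. p k \<ge> 0) \<and> (\<Sum>k<K. p k) = 1 \<and>
        (\<forall>k<K. m_separable_pure n m (v k)) \<and>
        \<rho> = mat (2 ^ n) (2 ^ n) (\<lambda>(i, j). \<Sum>k<K. complex_of_real (p k) * proj (v k) $$ (i, j)))"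

end

theory Submission
  imports Defs
begin

(* Write N = 2^n - 1, so that N - x is the bitwise complement of the basis index x. Since M_X
   maps every basis vector to its complement, a pure state v has
     <v|W|v> = alpha (|v_0|^2 + |v_N|^2) + sum_l conj(v_l) v_(N-l).
   If v is a product over m blocks of qubits, then for every proper nonempty set S of blocks the
   index x_S that is one exactly on the qubits of the blocks in S satisfies
   |v_(x_S)| |v_(N-x_S)| = |v_0| |v_N|. So the coherence |v_0| |v_N| can only be large if much
   weight lies outside {0, N}: the off-diagonal terms there add up to at least
   (2^m - 2) |v_0| |v_N|, but by AM-GM to at most that weight. Optimising this trade-off bounds
   the expectation for pure states, and mixtures follow by linearity of the trace. *)

unbundle bit_operations_syntax

lemma qbit_eq_bit: "qbit x k = bit x k"
  by (simp add: qbit_def bit_iff_odd)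

lemma bit_imp_less_of_less_exp:
  fixes x :: nat
  assumes "x < 2 ^ n" and "bit x k"
  shows "k < n"
  by (metis assms bit_take_bit_iff take_bit_nat_eq_self)

lemma nat_eq_if_bits_eq_below:
  fixes x y :: nat
  assumes "x < 2 ^ n" and "y < 2 ^ n" and "\<And>k. k < n \<Longrightarrow> bit x k = bit y k"
  shows "x = y"
  using assms by (intro bit_eqI) (metis bit_imp_less_of_less_exp)

definition nat_of_bits :: "nat \<Rightarrow> (nat \<Rightarrow> bool) \<Rightarrow> nat" where
  "nat_of_bits n f = horner_sum of_bool 2 (map f [0..<n])"

lemma bit_nat_of_bits_iff: "bit (nat_of_bits n f) k \<longleftrightarrow> k < n \<and> f k"
  by (auto simp: nat_of_bits_def bit_horner_sum_bit_iff possible_bit_def)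

lemma nat_of_bits_less_exp: "nat_of_bits n f < 2 ^ n"
  by (metis nat_of_bits_def take_bit_horner_sum_bit_eq take_bit_nat_less_exp length_map length_upt
      minus_nat.diff_0 take_all_iff order_refl)

definition flip_bits :: "nat \<Rightarrow> nat \<Rightarrow> nat" where
  "flip_bits n x = 2 ^ n - 1 - x"

lemma flip_bits_less_exp: "flip_bits n x < 2 ^ n"
  by (simp add: flip_bits_def)

lemma bit_flip_bits_iff:
  assumes "x < 2 ^ n"
  shows "bit (flip_bits n x) k \<longleftrightarrow> k < n \<and> \<not> bit x k"
proof -
  have "int (flip_bits n x) = mask n - take_bit n (int x)"
    using assms by (simp add: flip_bits_def mask_eq_exp_minus_1 of_nat_diff take_bit_nat_eq_self
        flip: of_nat_take_bit)
  also have "\<dots> = take_bit n (NOT (int x))"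
    by (rule take_bit_not_eq_mask_diff[symmetric])
  finally have "bit (int (flip_bits n x)) k \<longleftrightarrow> bit (take_bit n (NOT (int x))) k"
    by simp
  then show ?thesis
    by (simp add: bit_simps)
qed

lemma bit_exp_minus_one_iff: "bit ((2::nat) ^ n - 1) k \<longleftrightarrow> k < n"
  using bit_flip_bits_iff[of 0 n k] by (simp add: flip_bits_def)

lemma dim_tensor_pow [simp]:
  "dim_row (tensor_pow A n) = 2 ^ n" "dim_col (tensor_pow A n) = 2 ^ n"
  by (simp_all add: tensor_pow_def)

lemma dim_W_se [simp]:
  "dim_row (W_se n \<alpha>) = 2 ^ n" "dim_col (W_se n \<alpha>) = 2 ^ n"
  by (simp_all add: W_se_def M_Z_def M_X_def)

lemma index_tensor_pow:
  assumes "i < 2 ^ n" and "j < 2 ^ n"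
  shows "tensor_pow A n $$ (i, j) = (\<Prod>k<n. A $$ (of_bool (bit i k), of_bool (bit j k)))"
  using assms by (simp add: tensor_pow_def qbit_eq_bit)

lemma sigma_x_index_of_bool: "sigma_x $$ (of_bool a, of_bool b) = of_bool (a \<noteq> b)"
  by (cases a; cases b) (simp_all add: sigma_x_def)

lemma ket0bra0_index_of_bool: "ket0bra0 $$ (of_bool a, of_bool b) = of_bool (\<not> a \<and> \<not> b)"
  by (cases a; cases b) (simp_all add: ket0bra0_def)

lemma ket1bra1_index_of_bool: "ket1bra1 $$ (of_bool a, of_bool b) = of_bool (a \<and> b)"
  by (cases a; cases b) (simp_all add: ket1bra1_def)

lemma prod_of_bool_lessThan:
  "(\<Prod>k<(n::nat). of_bool (P k) :: 'a :: comm_semiring_1) = of_bool (\<forall>k<n. P k)"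
  by (induction n) (auto simp: less_Suc_eq)

lemma index_M_X:
  assumes i: "i < 2 ^ n" and j: "j < 2 ^ n"
  shows "M_X n $$ (i, j) = of_bool (j = flip_bits n i)"
proof -
  have "(\<forall>k<n. bit i k \<noteq> bit j k) \<longleftrightarrow> j = flip_bits n i"
    using nat_eq_if_bits_eq_below[OF j flip_bits_less_exp] by (auto simp: bit_flip_bits_iff[OF i])
  then show ?thesis
    by (simp add: M_X_def index_tensor_pow[OF i j] sigma_x_index_of_bool prod_of_bool_lessThan)
qed

lemma index_M_Z:
  assumes i: "i < 2 ^ n" and j: "j < 2 ^ n"
  shows "M_Z n $$ (i, j) = of_bool (i = 0 \<and> j = 0) + of_bool (i = 2 ^ n - 1 \<and> j = 2 ^ n - 1)"
proof -
  have zeros: "(\<forall>k<n. \<not> bit x k) \<longleftrightarrow> x = 0" if "x < 2 ^ n" for x :: nat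
    using nat_eq_if_bits_eq_below[OF that, of 0] by auto
  have ones: "(\<forall>k<n. bit x k) \<longleftrightarrow> x = 2 ^ n - 1" if "x < 2 ^ n" for x :: nat
    using nat_eq_if_bits_eq_below[OF that, of "2 ^ n - 1"] bit_exp_minus_one_iff[of n] by auto
  show ?thesis
    using i j zeros[OF i] zeros[OF j] ones[OF i] ones[OF j]
    by (auto simp: M_Z_def index_tensor_pow ket0bra0_index_of_bool ket1bra1_index_of_bool
        prod_of_bool_lessThan)
qed

lemma index_W_se:
  assumes "i < 2 ^ n" and "j < 2 ^ n"
  shows "W_se n \<alpha> $$ (i, j) =
    complex_of_real \<alpha> * (of_bool (i = 0 \<and> j = 0) + of_bool (i = 2 ^ n - 1 \<and> j = 2 ^ n - 1))
    + of_bool (j = flip_bits n i)"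
proof -
  have "dim_row (M_Z n) = 2 ^ n" "dim_col (M_Z n) = 2 ^ n"
    and "dim_row (M_X n) = 2 ^ n" "dim_col (M_X n) = 2 ^ n"
    by (simp_all add: M_Z_def M_X_def)
  then show ?thesis
    using assms by (simp add: W_se_def index_M_X index_M_Z)
qed

definition expval :: "complex mat \<Rightarrow> complex vec \<Rightarrow> complex" where
  "expval W v = (\<Sum>l<dim_vec v. \<Sum>i<dim_vec v. cnj (v $ l) * W $$ (l, i) * v $ i)"

lemma mat_trace_mixture_mult:
  assumes W: "dim_row W = N" "dim_col W = N" and v: "\<And>k. k < K \<Longrightarrow> dim_vec (v k) = N"
  shows "mat_trace (mat N N (\<lambda>(i, j). \<Sum>k<K. c k * proj (v k) $$ (i, j)) * W)
    = (\<Sum>k<K. c k * expval W (v k))"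
proof -
  let ?\<rho> = "mat N N (\<lambda>(i, j). \<Sum>k<K. c k * proj (v k) $$ (i, j))"
  have diag: "(?\<rho> * W) $$ (i, i) = (\<Sum>l<N. \<Sum>k<K. c k * (cnj (v k $ l) * W $$ (l, i) * v k $ i))"
    if "i < N" for i
  proof -
    have "(?\<rho> * W) $$ (i, i) = (\<Sum>l<N. ?\<rho> $$ (i, l) * W $$ (l, i))"
      using that W by (simp add: index_mult_mat scalar_prod_def lessThan_atLeast0)
    also have "\<dots> = (\<Sum>l<N. \<Sum>k<K. c k * (cnj (v k $ l) * W $$ (l, i) * v k $ i))"
      using that v
      by (intro sum.cong refl) (simp add: proj_def sum_distrib_left sum_distrib_right mult_ac)
    finally show ?thesis .
  qed
  have "mat_trace (?\<rho> * W) = (\<Sum>i<N. \<Sum>l<N. \<Sum>k<K. c k * (cnj (v k $ l) * W $$ (l, i) * v k $ i))"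
    by (simp add: mat_trace_def diag)
  also have "\<dots> = (\<Sum>l<N. \<Sum>i<N. \<Sum>k<K. c k * (cnj (v k $ l) * W $$ (l, i) * v k $ i))"
    by (rule sum.swap)
  also have "\<dots> = (\<Sum>l<N. \<Sum>k<K. \<Sum>i<N. c k * (cnj (v k $ l) * W $$ (l, i) * v k $ i))"
    by (rule sum.cong[OF refl], rule sum.swap)
  also have "\<dots> = (\<Sum>k<K. \<Sum>l<N. \<Sum>i<N. c k * (cnj (v k $ l) * W $$ (l, i) * v k $ i))"
    by (rule sum.swap)
  also have "\<dots> = (\<Sum>k<K. c k * (\<Sum>l<N. \<Sum>i<N. cnj (v k $ l) * W $$ (l, i) * v k $ i))"
    by (simp only: sum_distrib_left)
  also have "\<dots> = (\<Sum>k<K. c k * expval W (v k))"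
    using v by (simp add: expval_def)
  finally show ?thesis .
qed

lemma expval_W_se:
  assumes dim: "dim_vec v = 2 ^ n"
  shows "expval (W_se n \<alpha>) v =
    complex_of_real \<alpha> * (cnj (v $ 0) * v $ 0 + cnj (v $ (2 ^ n - 1)) * v $ (2 ^ n - 1))
    + (\<Sum>l<2 ^ n. cnj (v $ l) * v $ flip_bits n l)"
proof -
  let ?N = "2 ^ n - 1 :: nat"
  have entry: "cnj (v $ l) * W_se n \<alpha> $$ (l, i) * v $ i
      = (if i = 0 then (if l = 0 then complex_of_real \<alpha> * (cnj (v $ 0) * v $ 0) else 0) else 0)
        + (if i = ?N then (if l = ?N then complex_of_real \<alpha> * (cnj (v $ ?N) * v $ ?N) else 0)
           else 0)
        + (if i = flip_bits n l then cnj (v $ l) * v $ flip_bits n l else 0)"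
    if "l < 2 ^ n" and "i < 2 ^ n" for l i
    using that by (cases "l = 0") (auto simp: index_W_se algebra_simps)
  have row: "(\<Sum>i<2 ^ n. cnj (v $ l) * W_se n \<alpha> $$ (l, i) * v $ i)
      = (if l = 0 then complex_of_real \<alpha> * (cnj (v $ 0) * v $ 0) else 0)
        + (if l = ?N then complex_of_real \<alpha> * (cnj (v $ ?N) * v $ ?N) else 0)
        + cnj (v $ l) * v $ flip_bits n l" if "l < 2 ^ n" for l
    using that by (simp add: entry sum.distrib flip_bits_less_exp)
  have "expval (W_se n \<alpha>) v =
      (\<Sum>l<2 ^ n. (if l = 0 then complex_of_real \<alpha> * (cnj (v $ 0) * v $ 0) else 0)
        + (if l = ?N then complex_of_real \<alpha> * (cnj (v $ ?N) * v $ ?N) else 0)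
        + cnj (v $ l) * v $ flip_bits n l)"
    unfolding expval_def dim by (rule sum.cong) (simp_all add: row)
  then show ?thesis
    by (simp add: sum.distrib distrib_left)
qed

lemma Re_expval_W_se_le:
  assumes "dim_vec v = 2 ^ n"
  shows "Re (expval (W_se n \<alpha>) v) \<le> \<alpha> * ((cmod (v $ 0))\<^sup>2 + (cmod (v $ (2 ^ n - 1)))\<^sup>2)
    + (\<Sum>l<2 ^ n. cmod (v $ l) * cmod (v $ flip_bits n l))"
proof -
  have cnj_mult_self: "cnj z * z = complex_of_real ((cmod z)\<^sup>2)" for z
    by (metis complex_norm_square mult.commute of_real_power)
  have "Re (\<Sum>l<2 ^ n. cnj (v $ l) * v $ flip_bits n l)
      \<le> (\<Sum>l<2 ^ n. cmod (v $ l) * cmod (v $ flip_bits n l))"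
    unfolding Re_sum by (rule sum_mono) (metis complex_Re_le_cmod complex_mod_cnj norm_mult)
  then show ?thesis
    by (simp add: expval_W_se[OF assms] cnj_mult_self)
qed

definition qubit_partition :: "nat \<Rightarrow> nat \<Rightarrow> (nat \<Rightarrow> nat set) \<Rightarrow> bool" where
  "qubit_partition n m G \<longleftrightarrow> (\<forall>j<m. G j \<noteq> {}) \<and> (\<forall>j<m. \<forall>j'<m. j \<noteq> j' \<longrightarrow> G j \<inter> G j' = {})
     \<and> (\<Union>j<m. G j) = {0..<n}"

lemma qubit_partition_less:
  "qubit_partition n m G \<Longrightarrow> j < m \<Longrightarrow> k \<in> G j \<Longrightarrow> k < n"
  unfolding qubit_partition_def by auto

lemma m_separable_pure_block_constant:
  assumes "m_separable_pure n m v"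
  obtains G and \<phi> :: "nat \<Rightarrow> bool \<Rightarrow> complex"
  where "qubit_partition n m G"
    and "\<And>(x::nat) b. x < 2 ^ n \<Longrightarrow> (\<And>j k. j < m \<Longrightarrow> k \<in> G j \<Longrightarrow> bit x k = b j)
           \<Longrightarrow> v $ x = (\<Prod>j<m. \<phi> j (b j))"
proof -
  obtain G and \<psi> :: "nat \<Rightarrow> (nat \<Rightarrow> bool) \<Rightarrow> complex" where G: "qubit_partition n m G"
    and amp: "\<And>x. x < 2 ^ n \<Longrightarrow> v $ x = (\<Prod>j<m. \<psi> j (\<lambda>k. if k \<in> G j then qbit x k else False))"
    using assms unfolding m_separable_pure_def qubit_partition_def by auto
  show thesis
  proof (rule that[of G "\<lambda>j b. \<psi> j (\<lambda>k. k \<in> G j \<and> b)"])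
    fix x :: nat and b
    assume x: "x < 2 ^ n" and blocks: "\<And>j k. j < m \<Longrightarrow> k \<in> G j \<Longrightarrow> bit x k = b j"
    have "(\<lambda>k. if k \<in> G j then qbit x k else False) = (\<lambda>k. k \<in> G j \<and> b j)" if "j < m" for j
      using blocks[OF that] by (auto simp: qbit_eq_bit)
    then show "v $ x = (\<Prod>j<m. \<psi> j (\<lambda>k. k \<in> G j \<and> b j))"
      by (simp add: amp[OF x])
  qed (fact G)
qed

definition block_index :: "nat \<Rightarrow> (nat \<Rightarrow> nat set) \<Rightarrow> nat set \<Rightarrow> nat" where
  "block_index n G S = nat_of_bits n (\<lambda>k. \<exists>j\<in>S. k \<in> G j)"

lemma bit_block_index_iff:
  assumes G: "qubit_partition n m G" and "S \<subseteq> {..<m}" and "j < m" and "k \<in> G j"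
  shows "bit (block_index n G S) k \<longleftrightarrow> j \<in> S"
proof -
  have "(\<exists>i\<in>S. k \<in> G i) \<longleftrightarrow> j \<in> S"
    using assms unfolding qubit_partition_def by blast
  then show ?thesis
    using qubit_partition_less[OF G \<open>j < m\<close> \<open>k \<in> G j\<close>]
    by (simp add: block_index_def bit_nat_of_bits_iff)
qed

lemma inj_on_block_index:
  assumes G: "qubit_partition n m G"
  shows "inj_on (block_index n G) (Pow {..<m})"
proof (rule inj_onI)
  fix S S' assume S: "S \<in> Pow {..<m}" and S': "S' \<in> Pow {..<m}"
    and eq: "block_index n G S = block_index n G S'"
  show "S = S'"
  proof (rule ccontr)
    assume "S \<noteq> S'"
    then obtain j where j: "j < m" "j \<in> S \<longleftrightarrow> j \<notin> S'"
      using S S' by blast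
    then obtain k where "k \<in> G j"
      using G unfolding qubit_partition_def by blast
    then show False
      using eq j S S' bit_block_index_iff[OF G] by (metis PowD)
  qed
qed

lemma block_index_proper_subset:
  assumes G: "qubit_partition n m G" and S: "S \<subseteq> {..<m}" "S \<noteq> {}" "S \<noteq> {..<m}"
  shows "block_index n G S \<noteq> 0" and "block_index n G S \<noteq> 2 ^ n - 1"
proof -
  obtain j k where "j \<in> S" "k \<in> G j"
    using S G unfolding qubit_partition_def by blast
  then have "bit (block_index n G S) k"
    using S bit_block_index_iff[OF G] by blast
  then show "block_index n G S \<noteq> 0"
    by (cases "block_index n G S = 0") simp_all
  obtain j' k' where "j' < m" "j' \<notin> S" "k' \<in> G j'"
    using S G unfolding qubit_partition_def by blast
  then have "\<not> bit (block_index n G S) k'" and "k' < n"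
    using S bit_block_index_iff[OF G] qubit_partition_less[OF G] by blast+
  then show "block_index n G S \<noteq> 2 ^ n - 1"
    using bit_exp_minus_one_iff by metis
qed

lemma card_proper_nonempty_subsets:
  assumes "1 \<le> m"
  shows "card (Pow {..<m} - {{}, {..<m}}) = 2 ^ m - 2"
proof -
  have "0 \<in> {..<m}"
    using assms by simp
  then have "{} \<noteq> {..<m}"
    by blast
  then have "card {{}, {..<m}} = 2"
    by simp
  then show ?thesis
    by (simp add: card_Diff_subset card_Pow)
qed

lemma m_separable_pure_flip_pairs_ge:
  assumes sep: "m_separable_pure n m v" and "1 \<le> m"
  shows "(2 ^ m - 2) * (cmod (v $ 0) * cmod (v $ (2 ^ n - 1)))
    \<le> (\<Sum>l \<in> {..<2 ^ n} - {0, 2 ^ n - 1}. cmod (v $ l) * cmod (v $ flip_bits n l))"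
proof -
  obtain G and \<phi> :: "nat \<Rightarrow> bool \<Rightarrow> complex" where G: "qubit_partition n m G"
    and amp: "\<And>x b. x < 2 ^ n \<Longrightarrow> (\<And>j k. j < m \<Longrightarrow> k \<in> G j \<Longrightarrow> bit x k = b j)
           \<Longrightarrow> v $ x = (\<Prod>j<m. \<phi> j (b j))"
    using m_separable_pure_block_constant[OF sep] by blast
  let ?a = "\<lambda>l. cmod (v $ l)"
  let ?x = "block_index n G"
  let ?Q = "Pow {..<m} - {{}, {..<m}}"
  have x_less: "?x S < 2 ^ n" for S
    by (simp add: block_index_def nat_of_bits_less_exp)
  have pair: "?a (?x S) * ?a (flip_bits n (?x S)) = ?a 0 * ?a (2 ^ n - 1)" if S: "S \<subseteq> {..<m}" for S
  proof -
    have "v $ ?x S = (\<Prod>j<m. \<phi> j (j \<in> S))"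
      using S by (intro amp x_less) (simp add: bit_block_index_iff[OF G])
    moreover have "v $ flip_bits n (?x S) = (\<Prod>j<m. \<phi> j (j \<notin> S))"
      using S by (intro amp flip_bits_less_exp)
        (simp add: bit_flip_bits_iff[OF x_less] bit_block_index_iff[OF G]
          qubit_partition_less[OF G])
    moreover have "v $ 0 = (\<Prod>j<m. \<phi> j False)"
      by (intro amp) simp_all
    moreover have "v $ (2 ^ n - 1) = (\<Prod>j<m. \<phi> j True)"
      by (intro amp) (use bit_exp_minus_one_iff qubit_partition_less[OF G] in auto)
    moreover have "cmod (\<phi> j (j \<in> S)) * cmod (\<phi> j (j \<notin> S)) = cmod (\<phi> j False) * cmod (\<phi> j True)"
      for j by (cases "j \<in> S") simp_all
    ultimately show ?thesis
      by (simp flip: prod_norm prod.distrib)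
  qed
  have "(2::nat) \<le> 2 ^ m"
    using power_increasing[of 1 m "2::nat"] \<open>1 \<le> m\<close> by simp
  then have "(2 ^ m - 2) * (?a 0 * ?a (2 ^ n - 1)) = (\<Sum>S\<in>?Q. ?a 0 * ?a (2 ^ n - 1))"
    using card_proper_nonempty_subsets[OF \<open>1 \<le> m\<close>] by (simp add: of_nat_diff)
  also have "\<dots> = (\<Sum>S\<in>?Q. ?a (?x S) * ?a (flip_bits n (?x S)))"
    using pair by (intro sum.cong) auto
  also have "\<dots> = (\<Sum>l \<in> ?x ` ?Q. ?a l * ?a (flip_bits n l))"
    using inj_on_block_index[OF G] by (simp add: sum.reindex inj_on_diff)
  also have "\<dots> \<le> (\<Sum>l \<in> {..<2 ^ n} - {0, 2 ^ n - 1}. ?a l * ?a (flip_bits n l))"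
  proof (rule sum_mono2)
    show "?x ` ?Q \<subseteq> {..<2 ^ n} - {0, 2 ^ n - 1}"
    proof (rule image_subsetI)
      fix S assume "S \<in> ?Q"
      then show "?x S \<in> {..<2 ^ n} - {0, 2 ^ n - 1}"
        using block_index_proper_subset[OF G, of S] x_less[of S] by blast
    qed
  qed simp_all
  finally show ?thesis .
qed

(* Z is the weight on the indices 0 and N, S the remaining weight, P = |v_0| |v_N|, T the
   off-diagonal sum over the remaining indices, and q = 2^m. *)
lemma witness_value_bound:
  fixes \<alpha> q Z S P T :: real
  assumes "Z + S = 1" and "T \<le> S" and "0 \<le> P" and "2 * P \<le> Z" and "(q - 2) * P \<le> T"
    and "0 < q" and "0 \<le> \<alpha>"
  shows "\<alpha> * Z + 2 * P + T \<le> max \<alpha> (2 * \<alpha> / q + 1)"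
proof -
  have "q * P \<le> 1"
    using assms(1,2,4,5) by (simp add: left_diff_distrib)
  then have P_le: "P \<le> 1 / q"
    using \<open>0 < q\<close> by (simp add: field_simps)
  have "\<alpha> * Z \<le> \<alpha> * (1 - T)"
    using assms(1,2,7) by (intro mult_left_mono) auto
  then have bound: "\<alpha> * Z + 2 * P + T \<le> \<alpha> + 2 * P + (1 - \<alpha>) * T"
    by (simp add: algebra_simps)
  show ?thesis
  proof (cases "\<alpha> \<le> 1")
    case True
    have "(1 - \<alpha>) * T \<le> (1 - \<alpha>) * (1 - 2 * P)"
      using True assms(1,2,4) by (intro mult_left_mono) auto
    then have "\<alpha> * Z + 2 * P + T \<le> 1 + 2 * (\<alpha> * P)"
      using bound by (simp add: algebra_simps)
    also have "\<alpha> * P \<le> \<alpha> * (1 / q)"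
      using P_le \<open>0 \<le> \<alpha>\<close> by (rule mult_left_mono)
    finally show ?thesis
      by simp
  next
    case False
    have "(1 - \<alpha>) * T \<le> (1 - \<alpha>) * ((q - 2) * P)"
      using False assms(5) by (intro mult_left_mono_neg) auto
    then have le: "\<alpha> * Z + 2 * P + T \<le> \<alpha> + (q - \<alpha> * (q - 2)) * P"
      using bound by (simp add: algebra_simps)
    show ?thesis
    proof (cases "q - \<alpha> * (q - 2) \<le> 0")
      case True
      then show ?thesis
        using le \<open>0 \<le> P\<close> mult_nonpos_nonneg[of _ P] by fastforce
    next
      case False
      have "(q - \<alpha> * (q - 2)) * P \<le> (q - \<alpha> * (q - 2)) * (1 / q)"
        using False P_le by (intro mult_left_mono) auto
      also have "\<dots> = 1 - \<alpha> + 2 * \<alpha> / q"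
        using \<open>0 < q\<close> by (simp add: field_simps)
      finally show ?thesis
        using le by simp
    qed
  qed
qed

lemma sum_mult_involution_le_sum_squares:
  fixes a :: "'a \<Rightarrow> real"
  assumes "\<And>x. x \<in> U \<Longrightarrow> f x \<in> U" and "\<And>x. x \<in> U \<Longrightarrow> f (f x) = x"
  shows "(\<Sum>x\<in>U. a x * a (f x)) \<le> (\<Sum>x\<in>U. (a x)\<^sup>2)"
proof -
  have "(\<Sum>x\<in>U. a x * a (f x)) \<le> (\<Sum>x\<in>U. ((a x)\<^sup>2 + (a (f x))\<^sup>2) / 2)"
  proof (rule sum_mono)
    fix x
    show "a x * a (f x) \<le> ((a x)\<^sup>2 + (a (f x))\<^sup>2) / 2"
      using sum_squares_bound[of "a x" "a (f x)"] by (simp add: mult.assoc)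
  qed
  also have "\<dots> = ((\<Sum>x\<in>U. (a x)\<^sup>2) + (\<Sum>x\<in>U. (a (f x))\<^sup>2)) / 2"
    by (simp only: sum.distrib[symmetric] sum_divide_distrib[symmetric])
  also have "(\<Sum>x\<in>U. (a (f x))\<^sup>2) = (\<Sum>x\<in>U. (a x)\<^sup>2)"
    by (rule sum.reindex_bij_witness[where i = f and j = f]) (simp_all add: assms)
  finally show ?thesis
    by simp
qed

lemma Re_expval_W_se_separable_pure_le:
  assumes sep: "m_separable_pure n m v" and "0 < n" and "2 \<le> m" and "0 \<le> \<alpha>"
  shows "Re (expval (W_se n \<alpha>) v) \<le> max \<alpha> (\<alpha> / 2 ^ (m - 1) + 1)"
proof -
  let ?N = "2 ^ n - 1 :: nat"
  let ?U = "{..<2 ^ n} - {0, ?N}"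
  define a where "a l = cmod (v $ l)" for l
  have dim: "dim_vec v = 2 ^ n" and unit: "(\<Sum>l<2 ^ n. (a l)\<^sup>2) = 1"
    using sep unfolding m_separable_pure_def pure_state_def a_def by blast+
  have "0 \<noteq> ?N"
    using one_less_power[of "2::nat" n] \<open>0 < n\<close> by simp
  have split: "(\<Sum>l<2 ^ n. f l) = f 0 + f ?N + sum f ?U" for f :: "nat \<Rightarrow> real"
  proof -
    have "(\<Sum>l<2 ^ n. f l) = f 0 + sum f ({..<2 ^ n} - {0})"
      by (rule sum.remove) simp_all
    moreover have "sum f ({..<2 ^ n} - {0}) = f ?N + sum f ({..<2 ^ n} - {0} - {?N})"
      using \<open>0 \<noteq> ?N\<close> by (intro sum.remove) auto
    moreover have "{..<2 ^ n} - {0} - {?N} = ?U"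
      by blast
    ultimately show ?thesis
      by (simp only: add.assoc)
  qed
  define S where "S = (\<Sum>l\<in>?U. (a l)\<^sup>2)"
  define T where "T = (\<Sum>l\<in>?U. a l * a (flip_bits n l))"
  have "T \<le> S"
    unfolding S_def T_def
    by (rule sum_mult_involution_le_sum_squares) (auto simp: flip_bits_def)
  have "(2 ^ m - 2) * (a 0 * a ?N) \<le> T"
    using m_separable_pure_flip_pairs_ge[OF sep] \<open>2 \<le> m\<close> unfolding T_def a_def by simp
  moreover have "2 * (a 0 * a ?N) \<le> (a 0)\<^sup>2 + (a ?N)\<^sup>2"
    using sum_squares_bound[of "a 0" "a ?N"] by (simp add: mult.assoc)
  moreover have "(a 0)\<^sup>2 + (a ?N)\<^sup>2 + S = 1"
    using unit unfolding split S_def .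
  moreover have "(4::real) \<le> 2 ^ m"
    using power_increasing[of 2 m "2::real"] \<open>2 \<le> m\<close> by simp
  ultimately have "\<alpha> * ((a 0)\<^sup>2 + (a ?N)\<^sup>2) + 2 * (a 0 * a ?N) + T \<le> max \<alpha> (2 * \<alpha> / 2 ^ m + 1)"
    using \<open>T \<le> S\<close> \<open>0 \<le> \<alpha>\<close> by (intro witness_value_bound) (auto simp: a_def)
  moreover have "2 * \<alpha> / 2 ^ m = \<alpha> / 2 ^ (m - 1)"
    using \<open>2 \<le> m\<close> by (simp add: power_eq_if)
  moreover have "Re (expval (W_se n \<alpha>) v) \<le> \<alpha> * ((a 0)\<^sup>2 + (a ?N)\<^sup>2) + 2 * (a 0 * a ?N) + T"
    using Re_expval_W_se_le[OF dim, of \<alpha>] unfolding split T_def a_def flip_bits_def by simp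
  ultimately show ?thesis
    by simp
qed

theorem mainTheorem1:
  fixes n m :: nat and \<alpha> :: real and \<rho> :: "complex mat"
  assumes "n \<ge> 2" and "2 \<le> m" and "m \<le> n"
    and "0 < \<alpha>" and "\<alpha> \<le> 2"
    and "m_separable n m \<rho>"
  shows "Re (mat_trace (\<rho> * W_se n \<alpha>)) \<le> max \<alpha> (\<alpha> / 2 ^ (m - 1) + 1)"
proof -
  obtain K :: nat and p :: "nat \<Rightarrow> real" and v
    where p_nonneg: "\<forall>k<K. 0 \<le> p k" and p_sum: "(\<Sum>k<K. p k) = 1"
    and sep: "\<forall>k<K. m_separable_pure n m (v k)"
    and \<rho>: "\<rho> = mat (2 ^ n) (2 ^ n) (\<lambda>(i, j). \<Sum>k<K. complex_of_real (p k) * proj (v k) $$ (i, j))"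
    using \<open>m_separable n m \<rho>\<close> unfolding m_separable_def by blast
  let ?bound = "max \<alpha> (\<alpha> / 2 ^ (m - 1) + 1)"
  have "\<And>k. k < K \<Longrightarrow> dim_vec (v k) = 2 ^ n"
    using sep by (simp add: m_separable_pure_def pure_state_def)
  then have "Re (mat_trace (\<rho> * W_se n \<alpha>)) = (\<Sum>k<K. p k * Re (expval (W_se n \<alpha>) (v k)))"
    unfolding \<rho> by (simp add: mat_trace_mixture_mult Re_sum)
  also have "\<dots> \<le> (\<Sum>k<K. p k * ?bound)"
    using p_nonneg sep Re_expval_W_se_separable_pure_le assms(1,2,4)
    by (intro sum_mono mult_left_mono) auto
  also have "\<dots> = ?bound"
    using p_sum by (simp flip: sum_distrib_right)
  finally show ?thesis .
qed

end
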